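(* Let $n=2k$, let $r$ be an integer with $1<r<k$ and $\gcd(r,k)=1$, and let $\{u_1,\ldots,u_k\}$ be a basis of $\mathbb{F}_{2^k}$ over $\mathbb{F}_2$. Let $t$ be a positive integer, $F_1,\ldots,F_t$ reduced polynomials in $\mathbb{F}_2[X_1,\ldots,X_k]$, and $f_i(x)=F_i(\mathrm{Tr}^n_1(u_1x),\ldots,\mathrm{Tr}^n_1(u_kx))$. Then $\widehat H(x)=(\sum_{i=1}^{2^r-1}x^{(i2^{k-r}+1)(2^k-1)+1},f_1(x),\ldots,f_t(x))$ is a vectorial plateaued $(n,k+t)$-function if and only if the $(n,t)$-function $(f_1,\ldots,f_t)$ is vectorial plateaued. In particular, if $k>2$ and each $f_i$ is quadratic, then $\widehat H$ is a non-quadratic vectorial plateaued function.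
   Context: $\mathrm{Tr}^m_1(x)=\sum_{i=0}^{m-1}x^{2^i}$. The first coordinate $G(x)=\sum_{i=1}^{2^r-1}x^{(i2^{k-r}+1)(2^k-1)+1}$ takes values in $\mathbb{F}_{2^k}$, so $\widehat H:\mathbb{F}_{2^n}\to\mathbb{F}_{2^k}\times\mathbb{F}_2^t$ with components $\mathrm{Tr}^k_1(\lambda G(x))+\sum_iv_if_i(x)$, $(\lambda,v)\ne(0,0)$. A Boolean function $f$ is plateaued if $W_f(a)=\sum_x(-1)^{f(x)+\mathrm{Tr}^n_1(ax)}$ takes values in $\{0,\pm2^s\}$ for some $n/2\le s\le n$; a vectorial function is vectorial plateaued if all components are plateaued. Quadratic means algebraic degree at most 2. A reduced polynomial is a multilinear polynomial over $\mathbb{F}_2$. *)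

theory Defs
  imports Main
begin

text \<open>The ambient field F_{2^n} is modelled as a finite field type 'a with card UNIV = 2^n.
  Boolean functions are functions 'a => 'a taking values in {0,1} (the prime field F_2).\<close>

definition tr :: "nat \<Rightarrow> 'a::field \<Rightarrow> 'a" where
  "tr m x = (\<Sum>i<m. x ^ (2 ^ i))"

definition subF :: "nat \<Rightarrow> 'a::field set" where
  "subF k = {x. x ^ (2 ^ k) = x}"

definition walsh :: "nat \<Rightarrow> ('a::{field,finite} \<Rightarrow> 'a) \<Rightarrow> 'a \<Rightarrow> int" where
  "walsh n f a = (\<Sum>x\<in>UNIV. (if f x + tr n (a * x) = 0 then 1 else -1))"

definition plateaued :: "nat \<Rightarrow> ('a::{field,finite} \<Rightarrow> 'a) \<Rightarrow> bool" where
  "plateaued n f \<longleftrightarrow> (\<exists>s::nat. n \<le> 2 * s \<and> s \<le> n \<and>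
      (\<forall>a. walsh n f a \<in> {0, 2 ^ s, - (2 ^ s)}))"

definition bweight :: "nat \<Rightarrow> nat" where
  "bweight j = card {i. bit j i}"

definition alg_deg_le :: "('a::{field,finite} \<Rightarrow> 'a) \<Rightarrow> nat \<Rightarrow> bool" where
  "alg_deg_le f d \<longleftrightarrow> (\<exists>c::nat \<Rightarrow> 'a.
      (\<forall>x. f x = (\<Sum>j<card (UNIV :: 'a set). c j * x ^ j)) \<and>
      (\<forall>j<card (UNIV :: 'a set). c j \<noteq> 0 \<longrightarrow> bweight j \<le> d))"

text \<open>A reduced polynomial over F_2 in X_0,...,X_{k-1} is given by its set of monomials,
  each monomial being a subset of {0..<k}; evaluation at y.\<close>
definition eval_reduced :: "nat set set \<Rightarrow> (nat \<Rightarrow> 'a::field) \<Rightarrow> 'a" where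
  "eval_reduced P y = (\<Sum>S\<in>P. \<Prod>j\<in>S. y j)"

definition Gfun :: "nat \<Rightarrow> nat \<Rightarrow> 'a::field \<Rightarrow> 'a" where
  "Gfun k r x = (\<Sum>i\<in>{1..2^r - 1}. x ^ ((i * 2^(k - r) + 1) * (2^k - 1) + 1))"

definition vcomb :: "nat \<Rightarrow> (nat \<Rightarrow> bool) \<Rightarrow> (nat \<Rightarrow> 'a \<Rightarrow> 'a::field) \<Rightarrow> 'a \<Rightarrow> 'a" where
  "vcomb t v f x = (\<Sum>i<t. if v i then f i x else 0)"

definition Hcomp :: "nat \<Rightarrow> ('a \<Rightarrow> 'a::field) \<Rightarrow> nat \<Rightarrow> (nat \<Rightarrow> 'a \<Rightarrow> 'a)
    \<Rightarrow> 'a \<Rightarrow> (nat \<Rightarrow> bool) \<Rightarrow> 'a \<Rightarrow> 'a" where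
  "Hcomp k G t f lam v x = tr k (lam * G x) + vcomb t v f x"

definition H_vplateaued :: "nat \<Rightarrow> nat \<Rightarrow> ('a \<Rightarrow> 'a::{field,finite}) \<Rightarrow> nat
    \<Rightarrow> (nat \<Rightarrow> 'a \<Rightarrow> 'a) \<Rightarrow> bool" where
  "H_vplateaued n k G t f \<longleftrightarrow> (\<forall>lam\<in>subF k. \<forall>v. (lam \<noteq> 0 \<or> (\<exists>i<t. v i)) \<longrightarrow>
      plateaued n (Hcomp k G t f lam v))"

definition H_quadratic :: "nat \<Rightarrow> ('a \<Rightarrow> 'a::{field,finite}) \<Rightarrow> nat
    \<Rightarrow> (nat \<Rightarrow> 'a \<Rightarrow> 'a) \<Rightarrow> bool" where
  "H_quadratic k G t f \<longleftrightarrow> (\<forall>lam\<in>subF k. \<forall>v. alg_deg_le (Hcomp k G t f lam v) 2)"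

definition F_vplateaued :: "nat \<Rightarrow> nat \<Rightarrow> (nat \<Rightarrow> 'a \<Rightarrow> 'a::{field,finite}) \<Rightarrow> bool" where
  "F_vplateaued n t f \<longleftrightarrow> (\<forall>v. (\<exists>i<t. v i) \<longrightarrow> plateaued n (vcomb t v f))"

end

theory Submission
  imports Defs "HOL-Computational_Algebra.Polynomial" "HOL-Computational_Algebra.Primes"
begin

(*
  For lam <> 0 the component Tr^k_1(lam G(x)) + phi(Tr^n_k(x)) is bent for every Boolean
  phi on GF(2^k). Every x outside GF(2^k) is uniquely t (y0 + s) with t, s in GF(2^k),
  t <> 0 and Tr^n_k(y0) = 1, and there G(x) = t (G(y0) + s^(2^(k-r)) + s). Summing over s
  first, the Walsh sum collapses to the roots t <> 0 of the linearized polynomial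
  (t lam)^(2^r) + c t, of which there is exactly one when c <> 0 because gcd(r, k) = 1; when
  c = 0 the sum over GF(2^k) itself contributes instead. Hence H is plateaued iff its
  components with lam = 0, the components of (f_1, ..., f_t), are.

  A Boolean quadratic function is plateaued: the square of its Walsh transform is 2^n times
  a character sum over the radical of its polar form, a subspace of size 2^d. Finally
  Tr^k_1 o G is not quadratic, since its polar form would make t |-> t^(2^r - 1) additive,
  hence the identity, on GF(2^k).
*)

lemma finite_bit_nat: "finite {i. bit (j::nat) i}"
proof (rule finite_subset)
  show "{i. bit j i} \<subseteq> {..<j}"
  proof
    fix i assume "i \<in> {i. bit j i}"
    then have "\<not> j < 2 ^ i" by (auto simp: bit_nat_def)
    then have "i < j" using less_exp[of i] by linarith
    then show "i \<in> {..<j}" by simp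
  qed
qed simp

lemma bweight_div2: "bweight j = (if odd j then 1 else 0) + bweight (j div 2)"
proof -
  have bits: "{i. bit j i} = (if odd j then {0} else {}) \<union> Suc ` {i. bit (j div 2) i}"
    by (rule set_eqI) (case_tac x; auto simp: bit_0 bit_Suc)
  have "card ((if odd j then {0} else {}) \<union> Suc ` {i. bit (j div 2) i})
      = card (if odd j then {0::nat} else {}) + card (Suc ` {i. bit (j div 2) i})"
    by (rule card_Un_disjoint) (auto intro: finite_bit_nat)
  then show ?thesis by (simp add: bweight_def bits card_image)
qed

lemma bweight_eq_0_imp: "bweight m = 0 \<Longrightarrow> m = 0"
proof (induction m rule: less_induct)
  case (less m)
  then have "even m" "bweight (m div 2) = 0" using bweight_div2[of m] by (auto split: if_splits)
  show ?case
  proof (rule ccontr)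
    assume "m \<noteq> 0"
    then have "m div 2 = 0" using less.IH[of "m div 2"] \<open>bweight (m div 2) = 0\<close> by simp
    then show False using \<open>m \<noteq> 0\<close> \<open>even m\<close> by auto
  qed
qed

lemma bweight_le_1_imp: "bweight m \<le> 1 \<Longrightarrow> m = 0 \<or> (\<exists>a. m = 2 ^ a)"
proof (induction m rule: less_induct)
  case (less m)
  show ?case
  proof (cases "odd m")
    case True
    then have "m div 2 = 0" using less.prems bweight_div2[of m] bweight_eq_0_imp by simp
    then have "m = 2 ^ 0" using True odd_two_times_div_two_succ[of m] by simp
    then show ?thesis by blast
  next
    case even: False
    then have m: "m = 2 * (m div 2)" by simp
    show ?thesis
    proof (cases "m = 0")
      case False
      then have "m div 2 < m" "bweight (m div 2) \<le> 1"
        using less.prems even bweight_div2[of m] by auto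
      then have "m div 2 = 0 \<or> (\<exists>a. m div 2 = 2 ^ a)" by (rule less.IH)
      then show ?thesis
      proof (elim disjE exE)
        fix a assume "m div 2 = 2 ^ a"
        then have "m = 2 ^ Suc a" using m by simp
        then show ?thesis by blast
      qed (use m in simp)
    qed simp
  qed
qed

lemma bweight_le_2_imp:
  "bweight m \<le> 2 \<Longrightarrow> m = 0 \<or> (\<exists>a. m = 2 ^ a) \<or> (\<exists>a b. m = 2 ^ a + 2 ^ b)"
proof (induction m rule: less_induct)
  case (less m)
  show ?case
  proof (cases "odd m")
    case True
    then have m: "m = 2 * (m div 2) + 2 ^ 0" by simp
    have "m div 2 = 0 \<or> (\<exists>a. m div 2 = 2 ^ a)"
      using less.prems True bweight_div2[of m] bweight_le_1_imp by simp
    then show ?thesis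
    proof (elim disjE exE)
      assume "m div 2 = 0"
      then have "m = 2 ^ 0" using m by simp
      then show ?thesis by blast
    next
      fix a assume "m div 2 = 2 ^ a"
      then have "m = 2 ^ Suc a + 2 ^ 0" using m by simp
      then show ?thesis by blast
    qed
  next
    case even: False
    then have m: "m = 2 * (m div 2)" by simp
    show ?thesis
    proof (cases "m = 0")
      case False
      then have "m div 2 < m" "bweight (m div 2) \<le> 2"
        using less.prems even bweight_div2[of m] by auto
      then have "m div 2 = 0 \<or> (\<exists>a. m div 2 = 2 ^ a) \<or> (\<exists>a b. m div 2 = 2 ^ a + 2 ^ b)"
        by (rule less.IH)
      then show ?thesis
      proof (elim disjE exE)
        fix a assume "m div 2 = 2 ^ a"
        then have "m = 2 ^ Suc a" using m by simp
        then show ?thesis by blast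
      next
        fix a b assume "m div 2 = 2 ^ a + 2 ^ b"
        then have "m = 2 ^ Suc a + 2 ^ Suc b" using m by simp
        then show ?thesis by blast
      qed (use m in simp)
    qed simp
  qed
qed

lemma even_exponent_if_square_eq_power2:
  assumes "(w::int) ^ 2 = 2 ^ m"
  shows "even m"
proof -
  have "w \<noteq> 0" using assms by auto
  have "multiplicity 2 (w ^ 2) = m" using assms by simp
  moreover have "multiplicity 2 (w ^ 2) = 2 * multiplicity 2 w"
    using \<open>w \<noteq> 0\<close> by (simp add: prime_elem_multiplicity_power_distrib)
  ultimately show ?thesis by presburger
qed

lemma power_two_power_power: "((x::'a::monoid_mult) ^ 2 ^ a) ^ 2 ^ b = x ^ 2 ^ (a + b)"
  by (simp add: power_mult[symmetric] power_add)

lemma power_two_power_pred: "(x::'a::monoid_mult) ^ 2 ^ m = x ^ (2 ^ m - 1) * x"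
  by (metis One_nat_def Suc_pred pos2 power_Suc2 zero_less_power)

lemma power_two_power_fixed_mult: "(\<rho>::'a::monoid_mult) ^ 2 ^ a = \<rho> \<Longrightarrow> \<rho> ^ 2 ^ (j * a) = \<rho>"
  by (induction j) (simp_all add: power_add power_mult)

lemma power_two_power_fixed_cancel:
  "(\<rho>::'a::monoid_mult) ^ 2 ^ a = \<rho> \<Longrightarrow> \<rho> ^ 2 ^ (a + b) = \<rho> \<Longrightarrow> \<rho> ^ 2 ^ b = \<rho>"
  by (metis power_two_power_power)

lemma power_two_power_fixed_gcd:
  "(\<rho>::'a::monoid_mult) ^ 2 ^ a = \<rho> \<Longrightarrow> \<rho> ^ 2 ^ b = \<rho> \<Longrightarrow> \<rho> ^ 2 ^ gcd a b = \<rho>"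
proof (induction a b rule: gcd_nat_induct)
  case (step a b)
  have "a = (a div b) * b + a mod b" by simp
  then have "\<rho> ^ 2 ^ (a mod b) = \<rho>"
    using power_two_power_fixed_mult[OF step(4)] step(3) power_two_power_fixed_cancel by metis
  then show ?case using step by (metis gcd_red_nat)
qed simp

lemma poly_nonroot_in:
  fixes p :: "'a::idom poly"
  assumes "p \<noteq> 0" "degree p < card S"
  shows "\<exists>x\<in>S. poly p x \<noteq> 0"
proof (rule ccontr)
  assume "\<not> ?thesis"
  then have "card S \<le> card {x. poly p x = 0}" by (intro card_mono) (auto simp: poly_roots_finite assms(1))
  also have "\<dots> \<le> degree p" by (rule card_poly_roots_bound[OF assms(1)])
  finally show False using assms(2) by simp
qed

lemma power_ne_power_in:
  assumes "d2 < d1" "d1 < card S"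
  shows "\<exists>x\<in>S. (x::'a::idom) ^ d1 \<noteq> x ^ d2"
proof -
  let ?p = "monom (1::'a) d1 - monom 1 d2"
  have "?p \<noteq> 0" using assms(1) by (metis coeff_diff coeff_monom diff_zero less_irrefl one_neq_zero coeff_0)
  moreover have "degree ?p \<le> d1"
    using assms(1) by (intro degree_diff_le) (auto intro: order.trans[OF degree_monom_le])
  ultimately obtain x where "x \<in> S" "poly ?p x \<noteq> 0"
    using poly_nonroot_in[of ?p S] assms by force
  then show ?thesis by (auto simp: poly_monom)
qed

lemma tr_0 [simp]: "tr m (0::'a::field) = 0"
  by (simp add: tr_def power_0_left)

lemma subF_0 [simp]: "0 \<in> subF k" and subF_1 [simp]: "1 \<in> subF k"
  by (simp_all add: subF_def)

lemma subF_mult: "x \<in> subF k \<Longrightarrow> y \<in> subF k \<Longrightarrow> (x::'a::field) * y \<in> subF k"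
  by (simp add: subF_def power_mult_distrib)

lemma subF_inverse: "x \<in> subF k \<Longrightarrow> inverse (x::'a::field) \<in> subF k"
  by (simp add: subF_def power_inverse)

lemma subF_divide: "x \<in> subF k \<Longrightarrow> y \<in> subF k \<Longrightarrow> (x::'a::field) / y \<in> subF k"
  by (simp add: subF_def power_divide)

lemma subF_power: "x \<in> subF k \<Longrightarrow> (x::'a::field) ^ m \<in> subF k"
  by (simp add: subF_def flip: power_mult) (metis mult.commute power_mult)

lemma alg_deg_le_0: "alg_deg_le (\<lambda>x. 0 :: 'a::{field,finite}) d"
  unfolding alg_deg_le_def by (rule exI[of _ "\<lambda>_. 0"]) simp

lemma alg_deg_le_add:
  assumes "alg_deg_le f d" "alg_deg_le g d"
  shows "alg_deg_le (\<lambda>x. f x + g x :: 'a::{field,finite}) d"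
proof -
  obtain c where c: "\<forall>x. f x = (\<Sum>j<card (UNIV :: 'a set). c j * x ^ j)"
    "\<forall>j<card (UNIV :: 'a set). c j \<noteq> 0 \<longrightarrow> bweight j \<le> d"
    using assms(1) unfolding alg_deg_le_def by blast
  obtain e where e: "\<forall>x. g x = (\<Sum>j<card (UNIV :: 'a set). e j * x ^ j)"
    "\<forall>j<card (UNIV :: 'a set). e j \<noteq> 0 \<longrightarrow> bweight j \<le> d"
    using assms(2) unfolding alg_deg_le_def by blast
  show ?thesis unfolding alg_deg_le_def
  proof (intro exI[of _ "\<lambda>j. c j + e j"] conjI allI impI)
    show "f x + g x = (\<Sum>j<card (UNIV :: 'a set). (c j + e j) * x ^ j)" for x
      using c(1) e(1) by (simp add: sum.distrib distrib_right)
    show "bweight j \<le> d" if "j < card (UNIV :: 'a set)" "c j + e j \<noteq> 0" for j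
      using that c(2) e(2) by fastforce
  qed
qed

lemma alg_deg_le_vcomb:
  assumes "\<forall>i<t. alg_deg_le (f i) d"
  shows "alg_deg_le (vcomb t v f :: 'a::{field,finite} \<Rightarrow> 'a) d"
  using assms
proof (induction t)
  case 0
  then show ?case by (simp add: vcomb_def alg_deg_le_0)
next
  case (Suc t)
  have "alg_deg_le (\<lambda>x. if v t then f t x else 0) d"
    using Suc.prems by (cases "v t") (simp_all add: alg_deg_le_0)
  then have "alg_deg_le (\<lambda>x. vcomb t v f x + (if v t then f t x else 0)) d"
    using Suc by (intro alg_deg_le_add) simp_all
  then show ?case by (simp add: vcomb_def)
qed

lemma Hcomp_0: "Hcomp k G t f 0 v = vcomb t v f"
  by (simp add: fun_eq_iff Hcomp_def)

lemma H_vplateaued_iff_F_vplateaued: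
  assumes "\<forall>lam \<in> subF k - {0}. \<forall>v. plateaued n (Hcomp k G t f lam v)"
  shows "H_vplateaued n k G t f \<longleftrightarrow> F_vplateaued n t f"
  using assms unfolding H_vplateaued_def F_vplateaued_def
  by (metis DiffI Hcomp_0 singletonD subF_0)

lemma not_H_quadratic:
  assumes "\<not> alg_deg_le (\<lambda>x. tr k (G x)) 2"
  shows "\<not> H_quadratic k G t f"
proof
  assume "H_quadratic k G t f"
  then have "alg_deg_le (Hcomp k G t f 1 (\<lambda>_. False)) 2"
    unfolding H_quadratic_def by simp
  moreover have "Hcomp k G t f 1 (\<lambda>_. False) = (\<lambda>x. tr k (G x))"
    by (simp add: fun_eq_iff Hcomp_def vcomb_def)
  ultimately show False using assms by simp
qed

definition polar :: "('a::{plus,zero} \<Rightarrow> 'b::plus) \<Rightarrow> 'a \<Rightarrow> 'a \<Rightarrow> 'b" where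
  "polar f x e = f (x + e) + f x + f e + f 0"

definition radical :: "('a::{plus,zero} \<Rightarrow> 'b::{plus,zero}) \<Rightarrow> 'a set" where
  "radical f = {e. \<forall>x. polar f x e = 0}"

definition chi :: "'a::zero \<Rightarrow> int" where
  "chi z = (if z = 0 then 1 else -1)"

lemma walsh_eq_sum_chi: "walsh n f a = (\<Sum>x\<in>UNIV. chi (f x + tr n (a * x)))"
  by (simp add: walsh_def chi_def)

subsection \<open>Finite fields of characteristic two\<close>

locale binary_field =
  fixes n :: nat and field_type :: "'a::{field,finite} itself"
  assumes card_UNIV: "card (UNIV :: 'a set) = 2 ^ n"
begin

lemma n_pos: "0 < n"
proof (rule ccontr)
  assume "\<not> 0 < n"
  then have "card (UNIV :: 'a set) = 1" using card_UNIV by simp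
  moreover have "card {0, 1::'a} \<le> card (UNIV :: 'a set)" by (rule card_mono) auto
  ultimately show False by simp
qed

lemma power_card_UNIV: "(x::'a) ^ 2 ^ n = x"
proof (cases "x = 0")
  case False
  have "(\<Prod>y\<in>UNIV - {0}. x * y) = (\<Prod>y\<in>UNIV - {0::'a}. y)"
    by (rule prod.reindex_bij_witness[of _ "\<lambda>y. y / x" "\<lambda>y. x * y"]) (use False in auto)
  then have "x ^ (2 ^ n - 1) = 1"
    using card_UNIV by (simp add: prod.distrib card_Diff_singleton)
  then show ?thesis by (simp add: power_two_power_pred)
qed (simp add: n_pos)

lemma subF_n: "subF n = (UNIV :: 'a set)"
  by (simp add: subF_def power_card_UNIV)

lemma one_add_one_eq_0: "(1::'a) + 1 = 0"
proof -
  have "(-1::'a) ^ 2 ^ n = -1" by (rule power_card_UNIV)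
  then have "(1::'a) = -1" using n_pos by simp
  then show ?thesis by (metis add.right_inverse)
qed

lemma add_self [simp]: "(x::'a) + x = 0"
  using one_add_one_eq_0 by (metis distrib_left mult_1_right mult_zero_right)

lemma two_eq_0 [simp]: "(2::'a) = 0"
  by (metis one_add_one one_add_one_eq_0)

lemma uminus_eq_self [simp]: "- (x::'a) = x"
  by (metis add_self add_eq_0_iff)

lemma diff_eq_add [simp]: "(x::'a) - y = x + y"
  by (metis diff_conv_add_uminus uminus_eq_self)

lemma add_add_cancel_left [simp]: "(x::'a) + (x + a) = a"
  by (simp add: add.assoc[symmetric])

lemma add_eq_0_iff_eq: "(x::'a) + y = 0 \<longleftrightarrow> x = y"
  by (metis add_self add.left_cancel)

lemma of_nat_parity: "(of_nat m :: 'a) = (if even m then 0 else 1)"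
  by (induction m) (auto simp: one_add_one_eq_0)

lemma square_add: "((x::'a) + y) ^ 2 = x ^ 2 + y ^ 2"
  by (simp add: power2_sum)

lemma frobenius_add: "((x::'a) + y) ^ 2 ^ m = x ^ 2 ^ m + y ^ 2 ^ m"
proof (induction m)
  case (Suc m)
  have "(x + y) ^ 2 ^ Suc m = ((x + y) ^ 2 ^ m) ^ 2" by (simp add: power_mult[symmetric] mult.commute)
  then show ?case using Suc square_add by (simp add: power_mult[symmetric] mult.commute)
qed simp

lemma frobenius_sum: "(\<Sum>i\<in>A. (f i::'a)) ^ 2 ^ m = (\<Sum>i\<in>A. f i ^ 2 ^ m)"
  by (induction A rule: infinite_finite_induct) (auto simp: frobenius_add)

lemma subF_add: "x \<in> subF m \<Longrightarrow> y \<in> subF m \<Longrightarrow> (x::'a) + y \<in> subF m"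
  by (simp add: subF_def frobenius_add)

lemma square_eq_self_iff: "(x::'a) ^ 2 = x \<longleftrightarrow> x = 0 \<or> x = 1"
proof -
  have "x ^ 2 = x \<longleftrightarrow> x * (x + 1) = 0"
    by (simp add: power2_eq_square distrib_left add_eq_0_iff_eq)
  then show ?thesis by (simp add: add_eq_0_iff_eq)
qed

lemma square_eq_self_add: "(x::'a) ^ 2 = x \<Longrightarrow> y ^ 2 = y \<Longrightarrow> (x + y) ^ 2 = x + y"
  by (simp add: square_add)

lemma square_eq_self_sum:
  "(\<And>i. i \<in> A \<Longrightarrow> f i ^ 2 = f i) \<Longrightarrow> (\<Sum>i\<in>A. (f i::'a)) ^ 2 = (\<Sum>i\<in>A. f i)"
  by (induction A rule: infinite_finite_induct) (auto intro: square_eq_self_add)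

lemma square_eq_self_prod:
  "(\<And>i. i \<in> A \<Longrightarrow> f i ^ 2 = f i) \<Longrightarrow> (\<Prod>i\<in>A. (f i::'a)) ^ 2 = (\<Prod>i\<in>A. f i)"
  by (induction A rule: infinite_finite_induct) (auto simp: power_mult_distrib)

lemma chi_add: "(x::'a) ^ 2 = x \<Longrightarrow> y ^ 2 = y \<Longrightarrow> chi (x + y) = chi x * chi y"
  by (auto simp: square_eq_self_iff chi_def)

lemma chi_add_one: "(x::'a) ^ 2 = x \<Longrightarrow> chi (x + 1) = - chi x"
  by (auto simp: square_eq_self_iff chi_def)

lemma sum_chi_additive:
  assumes closed: "\<And>x y. x \<in> A \<Longrightarrow> y \<in> A \<Longrightarrow> (x::'a) + y \<in> A"
    and additive: "\<And>x y. x \<in> A \<Longrightarrow> y \<in> A \<Longrightarrow> \<psi> (x + y) = \<psi> x + \<psi> y"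
    and boolean: "\<And>x. x \<in> A \<Longrightarrow> \<psi> x ^ 2 = (\<psi> x::'a)"
  shows "(\<Sum>x\<in>A. chi (\<psi> x)) = (if \<forall>x\<in>A. \<psi> x = 0 then int (card A) else 0)"
proof (cases "\<forall>x\<in>A. \<psi> x = 0")
  case False
  then obtain x0 where x0: "x0 \<in> A" "\<psi> x0 = 1" using boolean square_eq_self_iff by blast
  have "(\<Sum>x\<in>A. chi (\<psi> x)) = (\<Sum>x\<in>A. chi (\<psi> (x + x0)))"
    by (rule sum.reindex_bij_witness[of _ "\<lambda>x. x + x0" "\<lambda>x. x + x0"])
       (auto simp: add.assoc x0 closed)
  also have "\<dots> = (\<Sum>x\<in>A. - chi (\<psi> x))"
    by (rule sum.cong) (auto simp: additive x0 chi_add_one boolean)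
  finally have "(\<Sum>x\<in>A. chi (\<psi> x)) = - (\<Sum>x\<in>A. chi (\<psi> x))" by (simp add: sum_negf)
  then show ?thesis by (subst if_not_P[OF False]) simp
qed (simp add: chi_def)

lemma tr_add: "tr m ((x::'a) + y) = tr m x + tr m y"
  by (simp add: tr_def frobenius_add sum.distrib)

lemma tr_square:
  assumes "z \<in> subF m"
  shows "tr m ((z::'a) ^ 2) = tr m z"
proof -
  have "tr m (z ^ 2) = (\<Sum>i<m. z ^ 2 ^ Suc i)"
    unfolding tr_def by (simp add: power_mult[symmetric] mult.commute)
  moreover have "(\<Sum>i<Suc m. z ^ 2 ^ i) = z ^ 2 ^ 0 + (\<Sum>i<m. z ^ 2 ^ Suc i)"
    by (rule sum.lessThan_Suc_shift)
  ultimately show ?thesis using assms by (simp add: tr_def subF_def)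
qed

lemma tr_frobenius: "z \<in> subF m \<Longrightarrow> tr m ((z::'a) ^ 2 ^ j) = tr m z"
proof (induction j)
  case (Suc j)
  have "z ^ 2 ^ Suc j = (z ^ 2 ^ j) ^ 2" by (simp add: power_mult[symmetric] mult.commute)
  then show ?case using Suc tr_square[OF subF_power[OF Suc.prems, of "2 ^ j"]] by simp
qed simp

lemma tr_square_eq_self: "z \<in> subF m \<Longrightarrow> (tr m (z::'a)) ^ 2 = tr m z"
  using frobenius_sum[of "\<lambda>i. z ^ 2 ^ i" "{..<m}" 1] tr_square[of z m]
  by (simp add: tr_def power_mult[symmetric] mult.commute)

lemma tr_n_square_eq_self: "(tr n (z::'a)) ^ 2 = tr n z"
  by (simp add: tr_square_eq_self subF_n)

subsection \<open>Quadratic Boolean functions are plateaued\<close>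

lemma polar_commute: "polar f x e = polar f e (x::'a)" for f :: "'a \<Rightarrow> 'a"
  by (simp add: polar_def ac_simps)

lemma polar_power_add_right:
  assumes "bweight j \<le> 2"
  shows "polar (\<lambda>x. x ^ j) x (e1 + e2) = polar (\<lambda>x. x ^ j) x e1 + polar (\<lambda>x::'a. x ^ j) x e2"
proof -
  from bweight_le_2_imp[OF assms]
  consider "j = 0" | a where "j = 2 ^ a" | a b where "j = 2 ^ a + 2 ^ b" by blast
  then show ?thesis
  proof cases
    case 1
    then show ?thesis by (simp add: polar_def)
  next
    case 2
    then show ?thesis by (simp add: polar_def frobenius_add add.assoc)
  next
    case 3
    \<comment> \<open>writing \<open>x ^ j = x ^ 2 ^ a * x ^ 2 ^ b\<close>, both sides differ by twice a ring element\<close>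
    have char2_identity: "(X1 + A1 + B1) * (X2 + A2 + B2) + X1 * X2 + (A1 + B1) * (A2 + B2)
      = ((X1 + A1) * (X2 + A2) + X1 * X2 + A1 * A2) + ((X1 + B1) * (X2 + B2) + X1 * X2 + B1 * B2)"
      for X1 X2 A1 A2 B1 B2 :: 'a
      by (simp add: algebra_simps)
    show ?thesis
      using 3 char2_identity[of "x ^ 2 ^ a" "e1 ^ 2 ^ a" "e2 ^ 2 ^ a" "x ^ 2 ^ b" "e1 ^ 2 ^ b" "e2 ^ 2 ^ b"]
      by (simp add: polar_def power_add frobenius_add add.assoc)
  qed
qed

lemma polar_add_right_if_quadratic:
  assumes "alg_deg_le f 2"
  shows "polar f x (e1 + e2) = polar f x e1 + polar f x (e2::'a)"
proof -
  let ?N = "card (UNIV :: 'a set)"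
  obtain c where f: "f = (\<lambda>x. \<Sum>j<?N. c j * x ^ j)"
    and deg: "\<And>j. j < ?N \<Longrightarrow> c j \<noteq> 0 \<Longrightarrow> bweight j \<le> 2"
    using assms unfolding alg_deg_le_def by blast
  have polar_f: "polar f x e = (\<Sum>j<?N. c j * polar (\<lambda>x. x ^ j) x e)" for e
    by (simp add: f polar_def sum.distrib distrib_left)
  have "c j * polar (\<lambda>x. x ^ j) x (e1 + e2)
      = c j * polar (\<lambda>x. x ^ j) x e1 + c j * polar (\<lambda>x. x ^ j) x e2" if "j < ?N" for j
    using deg[OF that] polar_power_add_right[of j x e1 e2] by (cases "c j = 0") (simp_all add: distrib_left)
  then show ?thesis by (simp add: polar_f sum.distrib)
qed

lemma polar_add_left_if_quadratic:
  "alg_deg_le f 2 \<Longrightarrow> polar f (x1 + x2) e = polar f x1 e + polar f (x2::'a) e"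
  by (metis polar_add_right_if_quadratic polar_commute)

lemma polar_square_eq_self: "(\<And>x. f x ^ 2 = f x) \<Longrightarrow> (polar f x e) ^ 2 = polar f x e"
  for f :: "'a \<Rightarrow> 'a"
  by (simp add: polar_def square_eq_self_add)

lemma card_additive_subgroup_dvd:
  assumes zero: "(0::'a) \<in> V" and closed: "\<And>x y. x \<in> V \<Longrightarrow> y \<in> V \<Longrightarrow> x + y \<in> V"
  shows "card V dvd 2 ^ n"
proof -
  define C where "C = (\<lambda>x. (+) x ` V) ` (UNIV :: 'a set)"
  have coset_subset: "(+) x1 ` V \<subseteq> (+) x2 ` V" if "x1 + x2 \<in> V" for x1 x2
  proof
    fix z assume "z \<in> (+) x1 ` V"
    then obtain v where v: "v \<in> V" "z = x1 + v" by blast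
    then have "z = x2 + ((x1 + x2) + v)" by (simp add: ac_simps)
    then show "z \<in> (+) x2 ` V" using closed[OF that v(1)] by blast
  qed
  have "card V * card C = card (\<Union>C)"
  proof (rule card_partition)
    show "card c = card V" if c: "c \<in> C" for c
    proof -
      obtain x where "c = (+) x ` V" using c unfolding C_def by blast
      then show ?thesis by (simp add: card_image)
    qed
    show "c1 \<inter> c2 = {}" if c1: "c1 \<in> C" and c2: "c2 \<in> C" and ne: "c1 \<noteq> c2" for c1 c2
    proof (rule ccontr)
      obtain x1 x2 where c: "c1 = (+) x1 ` V" "c2 = (+) x2 ` V"
        using c1 c2 unfolding C_def by blast
      assume "c1 \<inter> c2 \<noteq> {}"
      then obtain v1 v2 where v: "v1 \<in> V" "v2 \<in> V" "x1 + v1 = x2 + v2" unfolding c by auto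
      have "x1 + x2 = (x1 + v1) + (x2 + v1)" by (simp add: ac_simps)
      also have "\<dots> = v1 + v2" using v(3) by (simp add: ac_simps)
      finally have "x1 + x2 \<in> V" "x2 + x1 \<in> V" using closed[OF v(1,2)] by (simp_all add: add.commute)
      then show False using ne c coset_subset by blast
    qed
  qed auto
  moreover have "\<Union>C = UNIV"
  proof -
    have "x \<in> (+) x ` V" for x by (rule image_eqI[where x = 0]) (simp_all add: zero)
    then show ?thesis unfolding C_def by blast
  qed
  ultimately have "2 ^ n = card V * card C" using card_UNIV by simp
  then show ?thesis by (rule dvdI)
qed

lemma zero_in_radical: "0 \<in> radical f" for f :: "'a \<Rightarrow> 'a"
  by (simp add: radical_def polar_def)

lemma radical_add:
  assumes "alg_deg_le f 2" "x \<in> radical f" "y \<in> radical f"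
  shows "x + y \<in> radical (f::'a \<Rightarrow> 'a)"
  using assms(2,3) by (simp add: radical_def polar_add_right_if_quadratic[OF assms(1)])

lemma sum_chi_polar:
  fixes f :: "'a \<Rightarrow> 'a"
  assumes boolean: "\<And>x. f x ^ 2 = f x" and quadratic: "alg_deg_le f 2"
  shows "(\<Sum>x\<in>UNIV. chi (polar f x e)) = (if e \<in> radical f then 2 ^ n else (0::int))"
  by (subst sum_chi_additive)
     (auto simp: polar_add_left_if_quadratic[OF quadratic] polar_square_eq_self[of f, OF boolean]
                 radical_def card_UNIV)

lemma walsh_square_if_quadratic:
  fixes f :: "'a \<Rightarrow> 'a"
  assumes boolean: "\<And>x. f x ^ 2 = f x" and quadratic: "alg_deg_le f 2"
  shows "(walsh n f a) ^ 2 = 2 ^ n * (\<Sum>e\<in>radical f. chi (f e + f 0 + tr n (a * e)))"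
proof -
  define g where "g x = f x + tr n (a * x)" for x
  define \<psi> where "\<psi> e = f e + f 0 + tr n (a * e)" for e
  have g_boolean: "g x ^ 2 = g x" for x
    unfolding g_def by (rule square_eq_self_add[OF boolean tr_n_square_eq_self])
  have \<psi>_boolean: "\<psi> e ^ 2 = \<psi> e" for e
    unfolding \<psi>_def by (intro square_eq_self_add boolean tr_n_square_eq_self)
  have chi_gg: "chi (g x) * chi (g (x + e)) = chi (\<psi> e) * chi (polar f x e)" for x e
  proof -
    have "g x + g (x + e) = \<psi> e + polar f x e"
      by (simp add: g_def \<psi>_def polar_def distrib_left tr_add add.commute add.left_commute)
    moreover have "(polar f x e) ^ 2 = polar f x e" by (rule polar_square_eq_self[of f, OF boolean])
    ultimately show ?thesis
      using chi_add[OF g_boolean[of x] g_boolean[of "x + e"]] chi_add[OF \<psi>_boolean[of e]] by simp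
  qed
  have "(walsh n f a) ^ 2 = (\<Sum>x\<in>UNIV. \<Sum>y\<in>UNIV. chi (g x) * chi (g y))"
    by (simp add: walsh_eq_sum_chi g_def power2_eq_square sum_product)
  also have "\<dots> = (\<Sum>x\<in>UNIV. \<Sum>e\<in>UNIV. chi (g x) * chi (g (x + e)))"
  proof (rule sum.cong[OF refl])
    fix x :: 'a
    show "(\<Sum>y\<in>UNIV. chi (g x) * chi (g y)) = (\<Sum>e\<in>UNIV. chi (g x) * chi (g (x + e)))"
      by (rule sum.reindex_bij_witness[of _ "\<lambda>y. x + y" "\<lambda>y. x + y"]) auto
  qed
  also have "\<dots> = (\<Sum>x\<in>UNIV. \<Sum>e\<in>UNIV. chi (\<psi> e) * chi (polar f x e))"
    by (simp add: chi_gg)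
  also have "\<dots> = (\<Sum>e\<in>UNIV. chi (\<psi> e) * (\<Sum>x\<in>UNIV. chi (polar f x e)))"
    by (subst sum.swap) (simp add: sum_distrib_left)
  also have "\<dots> = 2 ^ n * (\<Sum>e\<in>radical f. chi (\<psi> e))"
    by (simp add: sum_chi_polar[OF boolean quadratic] if_distrib sum.If_cases sum_distrib_left mult.commute)
  finally show ?thesis by (simp add: \<psi>_def)
qed

lemma sum_chi_radical:
  fixes f :: "'a \<Rightarrow> 'a"
  assumes boolean: "\<And>x. f x ^ 2 = f x" and quadratic: "alg_deg_le f 2"
  shows "(\<Sum>e\<in>radical f. chi (f e + f 0 + tr n (a * e))) \<in> {0, int (card (radical f))}"
proof -
  have "f (x + y) = f x + f y + f 0" if "x \<in> radical f" "y \<in> radical f" for x y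
  proof -
    have "polar f x y = 0" using that by (simp add: radical_def)
    then show ?thesis by (simp only: polar_def add.assoc add_eq_0_iff_eq)
  qed
  then have "(\<Sum>e\<in>radical f. chi (f e + f 0 + tr n (a * e)))
      = (if \<forall>e\<in>radical f. f e + f 0 + tr n (a * e) = 0 then int (card (radical f)) else 0)"
    by (intro sum_chi_additive)
       (auto simp: radical_add[OF quadratic] square_eq_self_add boolean tr_n_square_eq_self
                   distrib_left tr_add ac_simps)
  then show ?thesis by simp
qed

lemma plateaued_if_quadratic:
  fixes f :: "'a \<Rightarrow> 'a"
  assumes boolean: "\<And>x. f x ^ 2 = f x" and quadratic: "alg_deg_le f 2"
  shows "plateaued n f"
proof -
  obtain d where d: "card (radical f) = 2 ^ d" "d \<le> n"
    using card_additive_subgroup_dvd[OF zero_in_radical radical_add[OF quadratic]]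
      divides_primepow_nat[of 2 "card (radical f)" n] by auto
  have W: "(walsh n f a) ^ 2 \<in> {0, 2 ^ (n + d)}" for a
    using walsh_square_if_quadratic[OF assms, of a] sum_chi_radical[OF assms, of a] d
    by (auto simp: power_add)
  show ?thesis
  proof (cases "\<forall>a. walsh n f a = 0")
    case True
    then show ?thesis unfolding plateaued_def using n_pos by (intro exI[of _ n]) auto
  next
    case False
    then obtain a0 where "walsh n f a0 \<noteq> 0" by blast
    then have "(walsh n f a0) ^ 2 = 2 ^ (n + d)" using W[of a0] by auto
    then have "even (n + d)" by (rule even_exponent_if_square_eq_power2)
    then obtain s where s: "n + d = 2 * s" by (metis evenE)
    have "walsh n f a \<in> {0, 2 ^ s, - (2 ^ s)}" for a
      using W[of a] by (auto simp: s power_mult power2_eq_iff[of _ "2 ^ s"] mult.commute[of 2 s])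
    moreover have "n \<le> 2 * s" "s \<le> n" using s d by auto
    ultimately show ?thesis unfolding plateaued_def by blast
  qed
qed

lemma eval_reduced_square_eq_self:
  assumes "\<And>S j. S \<in> P \<Longrightarrow> j \<in> S \<Longrightarrow> y j ^ 2 = y j"
  shows "(eval_reduced P y) ^ 2 = (eval_reduced P y :: 'a)"
  unfolding eval_reduced_def using assms by (intro square_eq_self_sum square_eq_self_prod) auto

lemma vcomb_square_eq_self:
  "(\<And>i. i < t \<Longrightarrow> f i x ^ 2 = f i x) \<Longrightarrow> (vcomb t v f x) ^ 2 = (vcomb t v f x :: 'a)"
  unfolding vcomb_def by (intro square_eq_self_sum) auto

lemma F_vplateaued_if_quadratic:
  assumes "\<And>i x. i < t \<Longrightarrow> f i x ^ 2 = (f i x :: 'a)" and "\<forall>i<t. alg_deg_le (f i) 2"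
  shows "F_vplateaued n t f"
  unfolding F_vplateaued_def
  using assms by (auto intro!: plateaued_if_quadratic vcomb_square_eq_self alg_deg_le_vcomb)

end

subsection \<open>The subfield \<open>GF(2\<^sup>k)\<close> and the relative trace\<close>

locale binary_field_ext = binary_field +
  fixes k :: nat
  assumes n_eq: "n = 2 * k"
begin

lemma k_pos: "0 < k"
  using n_pos n_eq by simp

lemma power_two_power_k_twice: "((x::'a) ^ 2 ^ k) ^ 2 ^ k = x"
  using power_card_UNIV[of x] by (simp add: power_two_power_power n_eq mult_2)

definition tr_rel :: "'a \<Rightarrow> 'a" where
  "tr_rel x = x + x ^ 2 ^ k"

lemma tr_rel_in_subF: "tr_rel x \<in> subF k"
  by (simp add: subF_def tr_rel_def frobenius_add power_two_power_k_twice add.commute)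

lemma tr_rel_add: "tr_rel (x + y) = tr_rel x + tr_rel y"
  by (simp add: tr_rel_def frobenius_add ac_simps)

lemma tr_rel_mult_subF: "c \<in> subF k \<Longrightarrow> tr_rel (c * x) = c * tr_rel x"
  by (simp add: tr_rel_def subF_def power_mult_distrib distrib_left)

lemma tr_rel_eq_0_iff: "tr_rel x = 0 \<longleftrightarrow> x \<in> subF k"
  by (auto simp: tr_rel_def subF_def add_eq_0_iff_eq)

lemma tr_n_eq_tr_tr_rel: "tr n (z::'a) = tr k (tr_rel z)"
proof -
  have "tr n z = (\<Sum>i<k. z ^ 2 ^ i) + (\<Sum>i\<in>{k..<k + k}. z ^ 2 ^ i)"
    by (simp add: tr_def n_eq mult_2 lessThan_atLeast0 sum.atLeastLessThan_concat)
  also have "(\<Sum>i\<in>{k..<k + k}. z ^ 2 ^ i) = tr k (z ^ 2 ^ k)"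
    using sum.shift_bounds_nat_ivl[of "\<lambda>i. z ^ 2 ^ i" 0 k k]
    by (simp add: tr_def power_two_power_power lessThan_atLeast0 add.commute)
  finally show ?thesis by (simp add: tr_rel_def tr_add tr_def[of k])
qed

lemma tr_n_mult_subF: "u \<in> subF k \<Longrightarrow> tr n (u * x) = tr k (u * tr_rel x)"
  by (simp add: tr_n_eq_tr_tr_rel tr_rel_mult_subF)

lemma card_subF_le: "card (subF k :: 'a set) \<le> 2 ^ k"
proof (rule ccontr)
  assume "\<not> ?thesis"
  then have "2 ^ k < card (subF k :: 'a set)" by simp
  moreover have "1 < (2::nat) ^ k" using one_less_power[of "2::nat" k] k_pos by simp
  ultimately obtain x :: 'a where "x \<in> subF k" "x ^ 2 ^ k \<noteq> x ^ 1"
    using power_ne_power_in[of 1 "2 ^ k" "subF k"] by blast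
  then show False by (simp add: subF_def)
qed

lemma card_fibre_tr_rel: "c \<in> range tr_rel \<Longrightarrow> card (tr_rel -` {c}) = card (subF k :: 'a set)"
proof (elim rangeE)
  fix x0 assume c: "c = tr_rel x0"
  have "bij_betw ((+) x0) (subF k) (tr_rel -` {c})"
    by (rule bij_betw_byWitness[where f' = "(+) x0"])
       (auto simp: c tr_rel_add tr_rel_eq_0_iff[symmetric] image_iff intro!: exI[of _ "x0 + _"])
  then show ?thesis using bij_betw_same_card by metis
qed

lemma card_subF: "card (subF k :: 'a set) = 2 ^ k"
  and range_tr_rel: "range tr_rel = (subF k :: 'a set)"
proof -
  let ?K = "subF k :: 'a set"
  define C where "C = (\<lambda>c. tr_rel -` {c}) ` range tr_rel"
  have "card ?K * card C = card (\<Union>C)"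
    by (rule card_partition) (auto simp: C_def card_fibre_tr_rel)
  moreover have "\<Union>C = UNIV" by (auto simp: C_def)
  ultimately have KC: "card ?K * card C = 2 ^ k * 2 ^ k"
    using card_UNIV by (simp add: n_eq mult_2 power_add)
  have C_le: "card C \<le> card (range tr_rel)" unfolding C_def by (rule card_image_le) simp
  have range_le: "card (range tr_rel) \<le> card ?K"
    by (rule card_mono) (auto simp: tr_rel_in_subF)
  have "2 ^ k \<le> card ?K"
  proof (rule ccontr)
    assume "\<not> ?thesis"
    then have "card ?K * card ?K < 2 ^ k * 2 ^ k" by (intro mult_strict_mono) auto
    moreover have "card ?K * card C \<le> card ?K * card ?K"
      using C_le range_le by (intro mult_le_mono2) simp
    ultimately show False using KC by simp
  qed
  then show K: "card ?K = 2 ^ k" using card_subF_le by simp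
  then have "card C = 2 ^ k" using KC by simp
  then have "card (range tr_rel) = card ?K" using C_le range_le K by simp
  then show "range tr_rel = ?K" by (intro card_subset_eq) (auto simp: tr_rel_in_subF)
qed

lemma tr_rel_eq_1_exists: "\<exists>y. tr_rel y = 1"
  using range_tr_rel subF_1 by (metis rangeE)

lemma tr_subF_nondegenerate:
  assumes "w \<in> subF k" "w \<noteq> 0"
  shows "\<exists>s\<in>subF k. tr k (s * w) \<noteq> (0::'a)"
proof -
  define p where "p = (\<Sum>i<k. monom (w ^ 2 ^ i) (2 ^ i))"
  have "coeff p (2 ^ (k - 1)) = (\<Sum>i<k. if i = k - 1 then w ^ 2 ^ i else 0)"
    unfolding p_def coeff_sum by (intro sum.cong) auto
  then have "coeff p (2 ^ (k - 1)) \<noteq> 0" using assms k_pos by simp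
  then have "p \<noteq> 0" by auto
  have "degree p \<le> 2 ^ (k - 1)" unfolding p_def
  proof (intro degree_sum_le)
    fix i assume "i \<in> {..<k}"
    then have "(2::nat) ^ i \<le> 2 ^ (k - 1)" by (intro power_increasing) auto
    then show "degree (monom (w ^ 2 ^ i) (2 ^ i)) \<le> 2 ^ (k - 1)"
      using degree_monom_le order_trans by blast
  qed simp
  moreover have "(2::nat) ^ (k - 1) < 2 ^ k" using k_pos by simp
  ultimately have "degree p < card (subF k :: 'a set)" using card_subF by linarith
  then obtain s where "s \<in> subF k" "poly p s \<noteq> 0"
    using poly_nonroot_in \<open>p \<noteq> 0\<close> by blast
  moreover have "poly p s = tr k (s * w)"
    by (simp add: p_def poly_sum poly_monom tr_def power_mult_distrib mult.commute)
  ultimately show ?thesis by auto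
qed

lemma sum_chi_tr_subF:
  assumes "w \<in> subF k"
  shows "(\<Sum>s\<in>subF k. chi (tr k (s * w))) = (if w = (0::'a) then 2 ^ k else 0)"
proof -
  have "(\<Sum>s\<in>subF k. chi (tr k (s * w))) =
     (if \<forall>s\<in>subF k. tr k (s * w) = 0 then int (card (subF k :: 'a set)) else 0)"
    by (rule sum_chi_additive)
       (auto simp: subF_add distrib_right tr_add intro!: tr_square_eq_self subF_mult assms)
  then show ?thesis using tr_subF_nondegenerate[OF assms] card_subF by auto
qed

lemma tr_mult_power_subF:
  assumes "(z::'a) \<in> subF k" "s \<in> subF k" "r \<le> k"
  shows "tr k (z * s ^ 2 ^ (k - r)) = tr k (z ^ 2 ^ r * s)"
proof -
  have "(z * s ^ 2 ^ (k - r)) ^ 2 ^ r = z ^ 2 ^ r * s ^ 2 ^ k"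
    using assms(3) by (simp add: power_mult_distrib power_two_power_power)
  then have "(z * s ^ 2 ^ (k - r)) ^ 2 ^ r = z ^ 2 ^ r * s" using assms(2) by (simp add: subF_def)
  then show ?thesis using tr_frobenius[OF subF_mult[OF assms(1) subF_power[OF assms(2), of "2 ^ (k - r)"]], of r] by simp
qed

lemma inj_power_subF:
  assumes "coprime r k" "t1 \<in> subF k" "t2 \<in> subF k" "t1 \<noteq> 0" "t2 \<noteq> 0"
    and eq: "(t1::'a) ^ (2 ^ r - 1) = t2 ^ (2 ^ r - 1)"
  shows "t1 = t2"
proof -
  define \<rho> where "\<rho> = t1 / t2"
  have "\<rho> ^ (2 ^ r - 1) = 1" using eq assms by (simp add: \<rho>_def power_divide)
  then have "\<rho> ^ 2 ^ r = \<rho>" by (simp add: power_two_power_pred)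
  moreover have "\<rho> \<in> subF k" using assms by (simp add: \<rho>_def subF_divide)
  then have "\<rho> ^ 2 ^ k = \<rho>" by (simp add: subF_def)
  ultimately have "\<rho> ^ 2 = \<rho>" using power_two_power_fixed_gcd[of \<rho> r k] assms(1) by simp
  then show ?thesis using assms by (auto simp: \<rho>_def square_eq_self_iff)
qed

lemma surj_power_subF:
  assumes "coprime r k" "c \<in> subF k" "c \<noteq> 0"
  shows "\<exists>t\<in>subF k - {0}. (t::'a) ^ (2 ^ r - 1) = c"
proof -
  let ?A = "subF k - {0::'a}"
  have "inj_on (\<lambda>t. t ^ (2 ^ r - 1)) ?A"
    using inj_power_subF[OF assms(1)] by (auto simp: inj_on_def)
  moreover have "(\<lambda>t. t ^ (2 ^ r - 1)) ` ?A \<subseteq> ?A" by (auto simp: subF_power)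
  ultimately have "(\<lambda>t. t ^ (2 ^ r - 1)) ` ?A = ?A" by (intro endo_inj_surj) auto
  then show ?thesis using assms by (metis Diff_iff empty_iff imageE insert_iff)
qed

lemma unique_root_subF:
  assumes "coprime r k" "lam \<in> subF k" "lam \<noteq> 0" "c \<in> subF k" "c \<noteq> 0"
  shows "\<exists>t0\<in>subF k - {0}. \<forall>t\<in>subF k - {0}. (t * lam) ^ 2 ^ r + c * t = 0 \<longleftrightarrow> t = (t0::'a)"
proof -
  have lam_r: "lam ^ 2 ^ r \<in> subF k" "lam ^ 2 ^ r \<noteq> 0" using assms by (auto simp: subF_power)
  obtain t0 where t0: "t0 \<in> subF k - {0}" "t0 ^ (2 ^ r - 1) = c / lam ^ 2 ^ r"
    using surj_power_subF[OF assms(1), of "c / lam ^ 2 ^ r"] lam_r assms(4,5) by (auto simp: subF_divide)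
  have "(t * lam) ^ 2 ^ r + c * t = 0 \<longleftrightarrow> t = t0" if t: "t \<in> subF k - {0}" for t
  proof -
    have "(t * lam) ^ 2 ^ r + c * t = 0 \<longleftrightarrow> t ^ (2 ^ r - 1) * lam ^ 2 ^ r = c"
      using t by (auto simp: add_eq_0_iff_eq power_mult_distrib power_two_power_pred)
    also have "\<dots> \<longleftrightarrow> t ^ (2 ^ r - 1) = t0 ^ (2 ^ r - 1)"
      using t0 lam_r by (auto simp: field_simps)
    also have "\<dots> \<longleftrightarrow> t = t0" using inj_power_subF[OF assms(1)] t t0(1) by blast
    finally show ?thesis .
  qed
  then show ?thesis using t0(1) by blast
qed

lemma bij_betw_outside_subF:
  assumes y0: "tr_rel y0 = 1"
  shows "bij_betw (\<lambda>(t, s). t * (y0 + s)) ((subF k - {0}) \<times> subF k) (- subF k :: 'a set)"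
proof (rule bij_betw_byWitness[where f' = "\<lambda>x. (tr_rel x, x / tr_rel x + y0)"])
  have tr_rel_image: "tr_rel (t * (y0 + s)) = t" if "t \<in> subF k" "s \<in> subF k" for t s
    using that y0 by (simp add: tr_rel_mult_subF tr_rel_add tr_rel_eq_0_iff[symmetric])
  have tr_rel_inverse: "tr_rel (x / tr_rel x + y0) = 0" if "tr_rel x \<noteq> 0" for x
    using that y0 tr_rel_mult_subF[OF subF_inverse[OF tr_rel_in_subF], of x x]
    by (simp add: tr_rel_add divide_inverse mult.commute)
  have "t * (y0 + s) / t + y0 = s" if "t \<noteq> 0" for t s
    using that by simp
  then show "\<forall>p\<in>(subF k - {0}) \<times> subF k. (\<lambda>x. (tr_rel x, x / tr_rel x + y0)) ((\<lambda>(t, s). t * (y0 + s)) p) = p"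
    by (auto simp: tr_rel_image)
  show "\<forall>x\<in>- subF k. (\<lambda>(t, s). t * (y0 + s)) ((\<lambda>x. (tr_rel x, x / tr_rel x + y0)) x) = x"
    by (auto simp: tr_rel_eq_0_iff[symmetric] add.commute[of y0])
  show "(\<lambda>(t, s). t * (y0 + s)) ` ((subF k - {0}) \<times> subF k) \<subseteq> - subF k"
    by (auto simp: tr_rel_eq_0_iff[symmetric] tr_rel_image)
  show "(\<lambda>x. (tr_rel x, x / tr_rel x + y0)) ` (- subF k) \<subseteq> (subF k - {0}) \<times> subF k"
    by (auto simp: tr_rel_eq_0_iff[symmetric] tr_rel_inverse tr_rel_eq_0_iff[THEN iffD2, OF tr_rel_in_subF])
qed

subsection \<open>The function \<open>G\<close>\<close>

lemma power_subF_pred_mult: "c \<in> subF k \<Longrightarrow> (c::'a) ^ (m * (2 ^ k - 1) + 1) = c"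
proof (cases "c = 0")
  case False
  assume "c \<in> subF k"
  then have "c ^ (2 ^ k - 1) = 1" using False by (simp add: subF_def power_two_power_pred)
  then show ?thesis by (simp add: power_add power_mult mult.commute[of m])
qed simp

lemma Gfun_mult_subF: "c \<in> subF k \<Longrightarrow> Gfun k r (c * x) = c * Gfun k r (x::'a)"
  unfolding Gfun_def sum_distrib_left
  by (intro sum.cong refl) (simp only: power_mult_distrib power_subF_pred_mult)

lemma Gfun_subF: "x \<in> subF k \<Longrightarrow> 1 \<le> r \<Longrightarrow> Gfun k r x = (x::'a)"
  using Gfun_mult_subF[of x r 1] by (simp add: Gfun_def of_nat_parity)

lemma power_two_power_k_if_tr_rel_eq_1: "tr_rel y = 1 \<Longrightarrow> y ^ 2 ^ k = y + 1"
  unfolding tr_rel_def by (metis add_add_cancel_left)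

lemma Gfun_geometric:
  assumes y: "tr_rel y = 1"
  shows "Gfun k r y = (y + 1) * (\<Sum>i=1..2 ^ r - 1. (((y + 1) / y) ^ 2 ^ (k - r)) ^ i)"
proof -
  define q where "q = (2::nat) ^ (k - r)"
  define z where "z = (y + 1) / y"
  have yk: "y ^ 2 ^ k = y + 1" using y by (rule power_two_power_k_if_tr_rel_eq_1)
  then have y0: "y \<noteq> 0" by (auto simp: power_0_left)
  have yz: "y ^ (2 ^ k - 1) = z" using yk y0 by (simp add: z_def power_two_power_pred field_simps)
  have "y ^ ((i * q + 1) * (2 ^ k - 1) + 1) = (z ^ q) ^ i * (y + 1)" for i
  proof -
    have "(i * q + 1) * (2 ^ k - 1) + 1 = (2 ^ k - 1) * (i * q) + (2 ^ k - 1) + 1"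
      by (simp add: algebra_simps)
    then have "y ^ ((i * q + 1) * (2 ^ k - 1) + 1) = (y ^ (2 ^ k - 1)) ^ (i * q) * y ^ (2 ^ k - 1) * y"
      by (simp only: power_add power_mult power_one_right)
    also have "\<dots> = z ^ (i * q) * (z * y)" by (simp only: yz mult.assoc)
    also have "z * y = y + 1" using y0 by (simp add: z_def)
    also have "z ^ (i * q) = (z ^ q) ^ i" by (metis mult.commute power_mult)
    finally show ?thesis .
  qed
  then show ?thesis
    unfolding Gfun_def q_def[symmetric] z_def[symmetric] sum_distrib_left
    by (intro sum.cong refl) (simp only: mult.commute)
qed

lemma Gfun_tr_rel_eq_1:
  assumes y: "tr_rel y = 1" and r: "1 \<le> r" "r < k"
  shows "Gfun k r y = (y::'a) ^ 2 ^ (k - r) + y + 1"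
proof -
  define q where "q = (2::nat) ^ (k - r)"
  define \<rho> where "\<rho> = ((y + 1) / y) ^ q"
  define S where "S = (\<Sum>i=1..2 ^ r - 1. \<rho> ^ i)"
  have yk: "y ^ 2 ^ k = y + 1" using y by (rule power_two_power_k_if_tr_rel_eq_1)
  have y0: "y \<noteq> 0" and y1: "y + 1 \<noteq> 0" using yk by (auto simp: add_eq_0_iff_eq power_0_left)
  have "\<rho> ^ 2 ^ r = ((y + 1) / y) ^ 2 ^ k"
    using r by (simp add: \<rho>_def q_def power_two_power_power)
  also have "\<dots> = y / (y + 1)" using yk by (simp add: power_divide frobenius_add)
  finally have \<rho>_r: "\<rho> ^ 2 ^ r = y / (y + 1)" .
  have "(y + 1) / y = 1 + 1 / y" using y0 by (simp add: field_simps)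
  then have \<rho>_eq: "\<rho> = 1 + 1 / y ^ q" by (simp add: \<rho>_def q_def frobenius_add power_one_over)
  have geometric: "(1 - \<rho>) * S = \<rho> + \<rho> ^ 2 ^ r"
    using sum_gp_multiplied[of 1 "2 ^ r - 1" \<rho>] one_less_power[of "2::nat" r] r by (simp add: S_def)
  have "1 - \<rho> = 1 / y ^ q" by (simp add: \<rho>_eq)
  then have "S = y ^ q * ((1 - \<rho>) * S)" using y0 by simp
  also have "\<dots> = y ^ q * (1 + 1 / y ^ q + y / (y + 1))"
    by (simp only: geometric \<rho>_r) (simp only: \<rho>_eq)
  finally have "(y + 1) * S = (y + 1) * (y ^ q + 1 + y ^ q * y / (y + 1))"
    using y0 by (simp add: distrib_left)
  also have "\<dots> = y ^ q * (y + 1) + (y + 1) + y ^ q * y"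
    using y1 by (simp add: distrib_left mult.commute)
  also have "\<dots> = y ^ q + y + 1" by (simp add: algebra_simps)
  finally show ?thesis using Gfun_geometric[OF y, of r] by (simp add: S_def \<rho>_def q_def)
qed

lemma Gfun_shift:
  assumes y: "tr_rel y = 1" and s: "s \<in> subF k" and r: "1 \<le> r" "r < k"
  shows "Gfun k r (y + s) = Gfun k r y + s ^ 2 ^ (k - r) + (s::'a)"
proof -
  have "tr_rel (y + s) = 1" using y s by (simp add: tr_rel_add tr_rel_eq_0_iff[symmetric])
  then show ?thesis
    using Gfun_tr_rel_eq_1[OF _ r] y by (simp add: frobenius_add ac_simps)
qed

lemma Gfun_in_subF:
  assumes y: "tr_rel y = 1" and r: "1 \<le> r" "r < k"
  shows "Gfun k r y \<in> subF k"
proof -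
  have "(y ^ 2 ^ (k - r)) ^ 2 ^ k = (y ^ 2 ^ k) ^ 2 ^ (k - r)" by (simp add: power_two_power_power add.commute)
  then show ?thesis
    using Gfun_tr_rel_eq_1[OF y r] power_two_power_k_if_tr_rel_eq_1[OF y]
    by (simp add: subF_def frobenius_add ac_simps)
qed

lemma component_on_coset:
  assumes y0: "tr_rel y0 = 1" and r: "1 \<le> r" "r < k"
    and lam: "lam \<in> subF k" and t: "t \<in> subF k" and s: "s \<in> subF k"
  shows "tr k (lam * Gfun k r (t * (y0 + s))) + tr n (a * (t * (y0 + s)))
       = tr k (t * (lam * Gfun k r y0 + tr_rel (a * y0)))
         + tr k (s * ((t * lam) ^ 2 ^ r + (lam + tr_rel a) * t))"
proof -
  have "lam * Gfun k r (t * (y0 + s)) = lam * (t * (Gfun k r y0 + s ^ 2 ^ (k - r) + s))"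
    by (simp only: Gfun_mult_subF[OF t] Gfun_shift[OF y0 s r])
  also have "\<dots> = t * (lam * Gfun k r y0) + (t * lam) * s ^ 2 ^ (k - r) + s * (lam * t)"
    by (simp add: algebra_simps)
  finally have G: "tr k (lam * Gfun k r (t * (y0 + s)))
      = tr k (t * (lam * Gfun k r y0)) + tr k (s * (t * lam) ^ 2 ^ r) + tr k (s * (lam * t))"
    using tr_mult_power_subF[OF subF_mult[OF t lam] s] r by (simp add: tr_add mult.commute)
  have "a * (t * (y0 + s)) = t * (a * y0) + (s * t) * a" by (simp add: algebra_simps)
  then have "tr n (a * (t * (y0 + s))) = tr k (t * tr_rel (a * y0)) + tr k ((s * t) * tr_rel a)"
    by (simp only: tr_n_eq_tr_tr_rel tr_rel_add tr_rel_mult_subF[OF t]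
        tr_rel_mult_subF[OF subF_mult[OF s t]] tr_add)
  also have "tr k ((s * t) * tr_rel a) = tr k (s * (tr_rel a * t))" by (simp add: mult_ac)
  finally have Tn: "tr n (a * (t * (y0 + s))) = tr k (t * tr_rel (a * y0)) + tr k (s * (tr_rel a * t))" .
  show ?thesis
    by (simp only: G Tn) (simp add: tr_add distrib_left distrib_right add.commute add.left_commute)
qed

lemma sum_chi_component_subF:
  assumes r: "1 \<le> r" and lam: "lam \<in> subF k" and \<phi>0: "\<phi> 0 ^ 2 = (\<phi> 0 :: 'a)"
  shows "(\<Sum>x\<in>subF k. chi (tr k (lam * Gfun k r x) + \<phi> (tr_rel x) + tr n (a * x)))
       = chi (\<phi> 0) * (if lam + tr_rel a = 0 then 2 ^ k else 0)"
proof -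
  have c: "lam + tr_rel a \<in> subF k" using lam by (simp add: subF_add tr_rel_in_subF)
  have "chi (tr k (lam * Gfun k r x) + \<phi> (tr_rel x) + tr n (a * x))
      = chi (\<phi> 0) * chi (tr k (x * (lam + tr_rel a)))" if x: "x \<in> subF k" for x
  proof -
    have "tr k (lam * Gfun k r x) + \<phi> (tr_rel x) + tr n (a * x) = \<phi> 0 + tr k (x * (lam + tr_rel a))"
      using x r by (simp add: Gfun_subF tr_rel_eq_0_iff[symmetric] tr_n_mult_subF[OF x, of a, unfolded mult.commute[of x]]
          distrib_left tr_add ac_simps)
    then show ?thesis using chi_add[OF \<phi>0 tr_square_eq_self[OF subF_mult[OF x c]]] by simp
  qed
  then show ?thesis by (simp add: sum_chi_tr_subF[OF c] flip: sum_distrib_left)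
qed

lemma sum_chi_component_outside_subF:
  assumes y0: "tr_rel y0 = 1" and r: "1 \<le> r" "r < k" and lam: "lam \<in> subF k"
    and \<phi>: "\<And>c. c \<in> subF k \<Longrightarrow> \<phi> c ^ 2 = (\<phi> c :: 'a)"
  shows "(\<Sum>x\<in>- subF k. chi (tr k (lam * Gfun k r x) + \<phi> (tr_rel x) + tr n (a * x)))
       = (\<Sum>t\<in>subF k - {0}. chi (tr k (t * (lam * Gfun k r y0 + tr_rel (a * y0))) + \<phi> t)
            * (if (t * lam) ^ 2 ^ r + (lam + tr_rel a) * t = 0 then 2 ^ k else 0))"
proof -
  define F where "F x = chi (tr k (lam * Gfun k r x) + \<phi> (tr_rel x) + tr n (a * x))" for x
  define \<Gamma> where "\<Gamma> = lam * Gfun k r y0 + tr_rel (a * y0)"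
  define ell where "ell t = (t * lam) ^ 2 ^ r + (lam + tr_rel a) * t" for t
  have \<Gamma>: "\<Gamma> \<in> subF k"
    using Gfun_in_subF[OF y0 r] lam by (simp add: \<Gamma>_def subF_add subF_mult tr_rel_in_subF)
  have ell: "ell t \<in> subF k" if "t \<in> subF k" for t
    using that lam by (simp add: ell_def subF_add subF_mult subF_power tr_rel_in_subF)
  have F_coset: "F (t * (y0 + s)) = chi (tr k (t * \<Gamma>) + \<phi> t) * chi (tr k (s * ell t))"
    if t: "t \<in> subF k" and s: "s \<in> subF k" for t s
  proof -
    have "tr_rel (t * (y0 + s)) = t"
      using t s y0 by (simp add: tr_rel_mult_subF tr_rel_add tr_rel_eq_0_iff[symmetric])
    then have "F (t * (y0 + s))
        = chi (\<phi> t + (tr k (lam * Gfun k r (t * (y0 + s))) + tr n (a * (t * (y0 + s)))))"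
      unfolding F_def by (simp only: add.commute[of "tr k _" "\<phi> t"] add.assoc)
    also have "\<dots> = chi (\<phi> t + (tr k (t * \<Gamma>) + tr k (s * ell t)))"
      by (simp only: component_on_coset[OF y0 r lam t s] \<Gamma>_def ell_def)
    also have "\<dots> = chi (tr k (t * \<Gamma>) + \<phi> t) * chi (tr k (s * ell t))"
      using \<phi>[OF t] tr_square_eq_self[OF subF_mult[OF t \<Gamma>]] tr_square_eq_self[OF subF_mult[OF s ell[OF t]]]
      by (simp add: chi_add square_eq_self_add mult_ac)
    finally show ?thesis .
  qed
  have "(\<Sum>x\<in>- subF k. F x) = (\<Sum>(t, s)\<in>(subF k - {0}) \<times> subF k. F (t * (y0 + s)))"
    using sum.reindex_bij_betw[OF bij_betw_outside_subF[OF y0], of F] by (simp add: case_prod_unfold)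
  also have "\<dots> = (\<Sum>t\<in>subF k - {0}. chi (tr k (t * \<Gamma>) + \<phi> t) * (\<Sum>s\<in>subF k. chi (tr k (s * ell t))))"
    by (simp add: sum.cartesian_product[symmetric] F_coset sum_distrib_left)
  also have "\<dots> = (\<Sum>t\<in>subF k - {0}. chi (tr k (t * \<Gamma>) + \<phi> t) * (if ell t = 0 then 2 ^ k else 0))"
    by (simp add: sum_chi_tr_subF ell)
  finally show ?thesis by (simp add: F_def \<Gamma>_def ell_def)
qed

lemma walsh_component_bent:
  assumes r: "1 < r" "r < k" "coprime r k" and lam: "lam \<in> subF k" "lam \<noteq> 0"
    and \<phi>: "\<And>c. c \<in> subF k \<Longrightarrow> \<phi> c ^ 2 = (\<phi> c :: 'a)"
  shows "walsh n (\<lambda>x. tr k (lam * Gfun k r x) + \<phi> (tr_rel x)) a \<in> {2 ^ k, - (2 ^ k)}"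
proof -
  obtain y0 where y0: "tr_rel y0 = 1" using tr_rel_eq_1_exists by blast
  let ?F = "\<lambda>x. chi (tr k (lam * Gfun k r x) + \<phi> (tr_rel x) + tr n (a * x))"
  let ?A = "\<lambda>t. chi (tr k (t * (lam * Gfun k r y0 + tr_rel (a * y0))) + \<phi> t)"
  let ?c = "lam + tr_rel a"
  have r1: "1 \<le> r" using r by simp
  have "walsh n (\<lambda>x. tr k (lam * Gfun k r x) + \<phi> (tr_rel x)) a = (\<Sum>x\<in>subF k. ?F x) + (\<Sum>x\<in>- subF k. ?F x)"
    by (simp add: walsh_eq_sum_chi sum.Int_Diff[of UNIV _ "subF k"] Compl_eq_Diff_UNIV)
  also have "\<dots> = chi (\<phi> 0) * (if ?c = 0 then 2 ^ k else 0)
      + (\<Sum>t\<in>subF k - {0}. ?A t * (if (t * lam) ^ 2 ^ r + ?c * t = 0 then 2 ^ k else 0))"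
    by (simp add: sum_chi_component_subF[of r lam \<phi> a, OF r1 lam(1) \<phi>[OF subF_0]]
        sum_chi_component_outside_subF[of y0 r lam \<phi> a, OF y0 r1 r(2) lam(1) \<phi>])
  also have "\<dots> \<in> {2 ^ k, - (2 ^ k)}"
  proof (cases "?c = 0")
    case True
    then show ?thesis using lam by (simp add: chi_def)
  next
    case False
    obtain t0 where t0: "t0 \<in> subF k - {0}"
      and root: "\<And>t. t \<in> subF k - {0} \<Longrightarrow> (t * lam) ^ 2 ^ r + ?c * t = 0 \<longleftrightarrow> t = t0"
      using unique_root_subF[OF r(3) lam, of ?c] False lam by (auto simp: subF_add tr_rel_in_subF)
    have "(\<Sum>t\<in>subF k - {0}. ?A t * (if (t * lam) ^ 2 ^ r + ?c * t = 0 then 2 ^ k else 0))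
        = (\<Sum>t\<in>subF k - {0}. if t = t0 then ?A t0 * 2 ^ k else 0)"
      by (intro sum.cong refl) (simp add: root)
    then show ?thesis using False t0 by (simp add: chi_def)
  qed
  finally show ?thesis .
qed

lemma plateaued_Hcomp:
  assumes r: "1 < r" "r < k" "coprime r k" and lam: "lam \<in> subF k" "lam \<noteq> 0"
    and factor: "\<And>x. vcomb t v f x = \<phi> (tr_rel x)"
    and \<phi>: "\<And>c. c \<in> subF k \<Longrightarrow> \<phi> c ^ 2 = (\<phi> c :: 'a)"
  shows "plateaued n (Hcomp k (Gfun k r) t f lam v)"
proof -
  have "Hcomp k (Gfun k r) t f lam v = (\<lambda>x. tr k (lam * Gfun k r x) + \<phi> (tr_rel x))"
    by (simp add: fun_eq_iff Hcomp_def factor)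
  then have "walsh n (Hcomp k (Gfun k r) t f lam v) a \<in> {0, 2 ^ k, - (2 ^ k)}" for a
    using walsh_component_bent[of r lam \<phi> a, OF r lam \<phi>] by simp
  then show ?thesis unfolding plateaued_def using n_eq by (intro exI[of _ k]) auto
qed

lemma polar_tr_Gfun:
  assumes y0: "tr_rel y0 = 1" and r: "1 \<le> r" "r < k" and s: "s \<in> subF k" and t: "t \<in> subF k"
  shows "polar (\<lambda>x. tr k (Gfun k r x)) s (t * y0) = tr k (s * (t::'a) ^ (2 ^ r - 1))"
proof (cases "t = 0")
  case True
  have "0 < 2 ^ r - (1::nat)" using one_less_power[of "2::nat" r] r by simp
  then show ?thesis using True by (simp add: polar_def power_0_left)
next
  case False
  have st: "s / t \<in> subF k" using s t by (simp add: subF_divide)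
  have eq: "s + t * y0 = t * (y0 + s / t)" using False by (simp add: distrib_left add.commute)
  have "tr k (Gfun k r (s + t * y0)) = tr k (t * (Gfun k r y0 + (s / t) ^ 2 ^ (k - r) + s / t))"
    unfolding eq by (simp only: Gfun_mult_subF[OF t] Gfun_shift[OF y0 st r])
  also have "\<dots> = tr k (t * Gfun k r y0) + tr k (t * (s / t) ^ 2 ^ (k - r)) + tr k s"
    using False by (simp add: distrib_left tr_add)
  finally have "tr k (Gfun k r (s + t * y0))
      = tr k (t * Gfun k r y0) + tr k (t * (s / t) ^ 2 ^ (k - r)) + tr k s" .
  moreover have "tr k (t * (s / t) ^ 2 ^ (k - r)) = tr k (s * t ^ (2 ^ r - 1))"
    using tr_mult_power_subF[OF t st] r False by (simp add: power_two_power_pred field_simps)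
  ultimately show ?thesis
    using s t r by (simp add: polar_def Gfun_subF Gfun_mult_subF ac_simps)
qed

lemma power_pred_eq_self_if_quadratic:
  assumes r: "1 \<le> r" "r < k" and quadratic: "alg_deg_le (\<lambda>x. tr k (Gfun k r (x::'a))) 2"
    and t: "(t::'a) \<in> subF k"
  shows "t ^ (2 ^ r - 1) = t"
proof -
  obtain y0 where y0: "tr_rel y0 = 1" using tr_rel_eq_1_exists by blast
  define w where "w = (1 + t) ^ (2 ^ r - 1) + 1 + t ^ (2 ^ r - 1)"
  have "w \<in> subF k" using t by (simp add: w_def subF_add subF_power)
  moreover have "tr k (s * w) = 0" if s: "s \<in> subF k" for s
  proof -
    let ?h = "\<lambda>x. tr k (Gfun k r x)"
    have "polar ?h s ((1 + t) * y0) = polar ?h s (1 * y0) + polar ?h s (t * y0)"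
      using polar_add_right_if_quadratic[OF quadratic, of s "1 * y0" "t * y0"]
      by (simp only: distrib_right)
    then have "tr k (s * (1 + t) ^ (2 ^ r - 1)) = tr k (s * 1 ^ (2 ^ r - 1)) + tr k (s * t ^ (2 ^ r - 1))"
      by (simp only: polar_tr_Gfun[OF y0 r s subF_1] polar_tr_Gfun[OF y0 r s t]
          polar_tr_Gfun[OF y0 r s subF_add[OF subF_1 t]])
    then show ?thesis by (simp add: w_def distrib_left tr_add)
  qed
  ultimately have "w = 0" using tr_subF_nondegenerate by blast
  then have w': "(1 + t) ^ (2 ^ r - 1) = 1 + t ^ (2 ^ r - 1)"
    by (simp add: w_def add_eq_0_iff_eq add.assoc)
  have "1 + t ^ 2 ^ r = (1 + t) ^ (2 ^ r - 1) * (1 + t)"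
    using power_two_power_pred[of "1 + t" r] by (simp add: frobenius_add)
  also have "\<dots> = 1 + t + t ^ (2 ^ r - 1) + t ^ (2 ^ r - 1) * t"
    by (simp only: w') (simp add: algebra_simps)
  also have "t ^ (2 ^ r - 1) * t = t ^ 2 ^ r" by (rule power_two_power_pred[symmetric])
  finally have "t + t ^ (2 ^ r - 1) = 0" by (simp add: add.commute add.left_commute)
  then show ?thesis by (simp add: add_eq_0_iff_eq)
qed

lemma tr_Gfun_not_quadratic:
  assumes r: "1 < r" "r < k"
  shows "\<not> alg_deg_le (\<lambda>x. tr k (Gfun k r (x::'a))) 2"
proof
  assume quadratic: "alg_deg_le (\<lambda>x. tr k (Gfun k r (x::'a))) 2"
  have "1 < 2 ^ r - (1::nat)"
    using power_increasing[of 2 r "2::nat"] r by simp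
  moreover have "(2::nat) ^ r < 2 ^ k" using r(2) by simp
  then have "2 ^ r - 1 < card (subF k :: 'a set)" using card_subF by linarith
  ultimately obtain t where "t \<in> (subF k :: 'a set)" "t ^ (2 ^ r - 1) \<noteq> t ^ 1"
    using power_ne_power_in by blast
  then show False using power_pred_eq_self_if_quadratic[OF _ r(2) quadratic] r(1) by simp
qed

lemma eval_reduced_tr_n:
  assumes "\<forall>S\<in>P. \<forall>j\<in>S. u j \<in> subF k"
  shows "eval_reduced P (\<lambda>j. tr n (u j * x)) = eval_reduced P (\<lambda>j. tr k (u j * tr_rel x))"
  unfolding eval_reduced_def using assms by (intro sum.cong prod.cong refl) (simp_all add: tr_n_mult_subF)

end

theorem corollary7:
  fixes n k r t :: nat and u :: "nat \<Rightarrow> 'a::{field,finite}"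
    and Fs :: "nat \<Rightarrow> nat set set"
  assumes card: "card (UNIV :: 'a set) = 2 ^ n"
    and nk: "n = 2 * k"
    and r: "1 < r" "r < k" "coprime r k"
    and u_in: "\<forall>j<k. u j \<in> subF k"
    and u_indep: "\<forall>c :: nat \<Rightarrow> bool. (\<Sum>j<k. if c j then u j else 0) = 0 \<longrightarrow> (\<forall>j<k. \<not> c j)"
    and u_span: "\<forall>y\<in>subF k. \<exists>c :: nat \<Rightarrow> bool. y = (\<Sum>j<k. if c j then u j else 0)"
    and t: "0 < t"
    and reduced: "\<forall>i<t. Fs i \<subseteq> Pow {0..<k}"
  shows "(H_vplateaued n k (Gfun k r) t (\<lambda>i x. eval_reduced (Fs i) (\<lambda>j. tr n (u j * x)))
            \<longleftrightarrow> F_vplateaued n t (\<lambda>i x. eval_reduced (Fs i) (\<lambda>j. tr n (u j * x))))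
       \<and> ((2 < k \<and> (\<forall>i<t. alg_deg_le (\<lambda>x. eval_reduced (Fs i) (\<lambda>j. tr n (u j * x))) 2))
            \<longrightarrow> H_vplateaued n k (Gfun k r) t (\<lambda>i x. eval_reduced (Fs i) (\<lambda>j. tr n (u j * x)))
              \<and> \<not> H_quadratic k (Gfun k r) t (\<lambda>i x. eval_reduced (Fs i) (\<lambda>j. tr n (u j * x))))"
proof -
  interpret binary_field_ext n "TYPE('a)" k
    by unfold_locales (fact card, fact nk)
  define f where "f i x = eval_reduced (Fs i) (\<lambda>j. tr n (u j * x))" for i x
  define \<phi> where "\<phi> v c = vcomb t v (\<lambda>i c. eval_reduced (Fs i) (\<lambda>j. tr k (u j * c))) c" for v c
  \<comment> \<open>only \<open>u j \<in> subF k\<close> is needed, not that \<open>u\<close> is a basis; and \<open>2 < k\<close> follows from \<open>1 < r < k\<close>\<close>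
  have u_subF: "\<forall>S\<in>Fs i. \<forall>j\<in>S. u j \<in> subF k" if "i < t" for i
    using that reduced u_in by (metis PowD atLeastLessThan_iff subsetD)
  have factor: "vcomb t v f x = \<phi> v (tr_rel x)" for v x
    unfolding vcomb_def f_def \<phi>_def by (intro sum.cong refl) (simp add: eval_reduced_tr_n u_subF)
  have \<phi>_boolean: "\<phi> v c ^ 2 = \<phi> v c" if "c \<in> subF k" for v c
    unfolding \<phi>_def using that u_subF
    by (intro vcomb_square_eq_self eval_reduced_square_eq_self tr_square_eq_self subF_mult) auto
  have f_boolean: "f i x ^ 2 = f i x" for i x
    unfolding f_def by (intro eval_reduced_square_eq_self tr_n_square_eq_self)
  have "\<forall>lam\<in>subF k - {0}. \<forall>v. plateaued n (Hcomp k (Gfun k r) t f lam v)"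
    using plateaued_Hcomp[OF r _ _ factor \<phi>_boolean] by blast
  then have iff: "H_vplateaued n k (Gfun k r) t f \<longleftrightarrow> F_vplateaued n t f"
    by (rule H_vplateaued_iff_F_vplateaued)
  show ?thesis
    using iff F_vplateaued_if_quadratic[of t f, OF f_boolean] not_H_quadratic[OF tr_Gfun_not_quadratic[OF r(1,2)]]
    unfolding f_def by blast
qed

end
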